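(* Let $R$ be an $n\times n$ symmetric random matrix whose entries $R_{i,j}$, $1\leq i\leq j\leq n$, are independent with $R_{i,j}=1-p_{i,j}$ with probability $p_{i,j}$ and $R_{i,j}=-p_{i,j}$ with probability $1-p_{i,j}$. Let $p=\max_{i,j}p_{i,j}$ and suppose $p\geq c\frac{\log^3 n}{n}$ for a sufficiently large absolute constant $c$. Then for every $u\in\{1,\dots,n\}$, every positive integer $k$, and every sufficiently large constant $C$, $$\Pr\Big[|e_u^\top R^ks|>\frac1{\sqrt n}\big(C\sqrt{np\log n}\big)^k\Big]\leq\exp(-\Omega(C\log n)).$$
   Context: $s\in\mathbb{R}^n$ is the signal vector with $s(i)=1/\sqrt n$ for $i\in S$ and $-1/\sqrt n$ for $i\in T$, where $S,T$ partition $\{1,\dots,n\}$ into halves; $e_u$ is the $u$-th standard basis vector. *)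

theory Defs
  imports "HOL-Probability.Probability"
begin

text \<open>Vectors in R^n are functions nat => real, indices 0..n-1; matrices nat => nat => real.\<close>

definition mat_vec :: "nat \<Rightarrow> (nat \<Rightarrow> nat \<Rightarrow> real) \<Rightarrow> (nat \<Rightarrow> real) \<Rightarrow> (nat \<Rightarrow> real)" where
  "mat_vec n A v = (\<lambda>i. \<Sum>j<n. A i j * v j)"

definition upper_idx :: "nat \<Rightarrow> (nat \<times> nat) set" where
  "upper_idx n = {(i, j). i \<le> j \<and> j < n}"

definition entry_pmf :: "real \<Rightarrow> real pmf" where
  "entry_pmf q = map_pmf (\<lambda>b. if b then 1 - q else - q) (bernoulli_pmf q)"

definition entries_pmf :: "nat \<Rightarrow> (nat \<Rightarrow> nat \<Rightarrow> real) \<Rightarrow> (nat \<times> nat \<Rightarrow> real) pmf" where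
  "entries_pmf n P = Pi_pmf (upper_idx n) 0 (\<lambda>(i, j). entry_pmf (P i j))"

definition sym_mat :: "(nat \<times> nat \<Rightarrow> real) \<Rightarrow> nat \<Rightarrow> nat \<Rightarrow> real" where
  "sym_mat X i j = X (min i j, max i j)"

definition signal :: "nat \<Rightarrow> nat set \<Rightarrow> nat \<Rightarrow> real" where
  "signal n S i = (if i \<in> S then 1 / sqrt (real n) else - 1 / sqrt (real n))"

definition pmax :: "nat \<Rightarrow> (nat \<Rightarrow> nat \<Rightarrow> real) \<Rightarrow> real" where
  "pmax n P = Max ((\<lambda>(i, j). P i j) ` {(i, j). i < n \<and> j < n})"

end

theory Submission
  imports Defs
begin

(*
  Moment method. Expanding (e_u^T R^k s)^(2m) gives a sum over 2m-tuples of walks of length k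
  from u. By independence and mean-zero entries, a term has nonzero mean only if every edge it
  uses is traversed at least twice; then it has at most m k distinct edges, hence at most
  m k + 1 vertices, and its mean is at most n^(-m) p^(#vertices - 1). Counting walk tuples by
  their new vertices gives E (e_u^T R^k s)^(2m) <= n^(-m) (4 (L + 1) (n p + L + 1))^L, L = m k.
  For k < J = ceil (C log n), Markov's inequality with J <= m k <= 2 J gives the bound.
  For k >= J, the case m = 1 bounds the expected squared Frobenius norm of R^l for
  J <= l < 2 J; off an event of small probability all these norms are small, and since k
  splits into blocks of such lengths, |R^k s| is small.
*)

section \<open>Lists of fixed length\<close>

lemma prod_list_map_eq_prod_count:
  fixes f :: "'a \<Rightarrow> 'b::comm_monoid_mult"
  assumes "set xs \<subseteq> X" "finite X"
  shows "prod_list (map f xs) = (\<Prod>x\<in>X. f x ^ count_list xs x)"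
  using assms(1)
proof (induction xs)
  case (Cons a xs)
  have "(\<Prod>x\<in>X. f x ^ count_list (a # xs) x) = (\<Prod>x\<in>X. (if x = a then f x else 1) * f x ^ count_list xs x)"
    by (intro prod.cong) auto
  also have "\<dots> = f a * (\<Prod>x\<in>X. f x ^ count_list xs x)"
    using Cons.prems assms(2) by (simp add: prod.distrib prod.If_cases Int_absorb1)
  finally show ?case using Cons by simp
qed simp

lemma abs_prod_list_map_le:
  fixes f :: "'a \<Rightarrow> real"
  assumes "\<And>x. x \<in> set xs \<Longrightarrow> \<bar>f x\<bar> \<le> W"
  shows "\<bar>prod_list (map f xs)\<bar> \<le> W ^ length xs"
  using assms
proof (induction xs)
  case (Cons a xs)
  then have "\<bar>f a\<bar> * \<bar>prod_list (map f xs)\<bar> \<le> W * W ^ length xs"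
    by (intro mult_mono) (auto intro: order.trans[OF abs_ge_zero])
  then show ?case by (simp add: abs_mult)
qed simp

lemma two_mul_card_set_le_length:
  assumes "\<forall>x\<in>set xs. count_list xs x \<noteq> 1"
  shows "2 * card (set xs) \<le> length xs"
proof -
  have "(\<Sum>x\<in>set xs. 2) \<le> (\<Sum>x\<in>set xs. count_list xs x)"
    using assms by (intro sum_mono) (metis count_list_0_iff less_2_cases not_less One_nat_def)
  also have "\<dots> = length xs" by (rule sum_count_set) auto
  finally show ?thesis by simp
qed

definition lists_of_length :: "'a set \<Rightarrow> nat \<Rightarrow> 'a list set" where
  "lists_of_length A k = {xs. set xs \<subseteq> A \<and> length xs = k}"

lemma finite_lists_of_length: "finite A \<Longrightarrow> finite (lists_of_length A k)"
  unfolding lists_of_length_def by (rule finite_lists_length_eq)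

lemma lists_of_length_0 [simp]: "lists_of_length A 0 = {[]}"
  by (auto simp: lists_of_length_def)

lemma sum_lists_of_length_Suc:
  fixes f :: "'a list \<Rightarrow> 'b::comm_monoid_add"
  assumes "finite A"
  shows "(\<Sum>xs\<in>lists_of_length A (Suc k). f xs) = (\<Sum>a\<in>A. \<Sum>xs\<in>lists_of_length A k. f (a # xs))"
proof -
  have "(\<Sum>xs\<in>lists_of_length A (Suc k). f xs) = (\<Sum>(xs, a)\<in>lists_of_length A k \<times> A. f (a # xs))"
    unfolding lists_of_length_def lists_length_Suc_eq
    by (subst sum.reindex[OF inj_split_Cons]) (simp add: case_prod_beta)
  also have "\<dots> = (\<Sum>a\<in>A. \<Sum>xs\<in>lists_of_length A k. f (a # xs))"
    by (simp add: sum.cartesian_product[symmetric] sum.swap[of _ A])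
  finally show ?thesis .
qed

lemma sum_lists_of_length_add:
  fixes f :: "'a list \<Rightarrow> 'b::comm_monoid_add"
  assumes "finite A"
  shows "(\<Sum>zs\<in>lists_of_length A (k + l). f zs)
       = (\<Sum>xs\<in>lists_of_length A k. \<Sum>ys\<in>lists_of_length A l. f (xs @ ys))"
proof (induction k arbitrary: f)
  case (Suc k)
  then show ?case by (simp add: sum_lists_of_length_Suc[OF assms])
qed simp

lemma sum_lists_of_length_concat:
  fixes f :: "'a list \<Rightarrow> 'b::comm_monoid_add"
  assumes "finite A"
  shows "(\<Sum>xss\<in>lists_of_length (lists_of_length A k) b. f (concat xss))
       = (\<Sum>xs\<in>lists_of_length A (b * k). f xs)"
proof (induction b arbitrary: f)
  case (Suc b)
  have "(\<Sum>xss\<in>lists_of_length (lists_of_length A k) (Suc b). f (concat xss))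
      = (\<Sum>xs\<in>lists_of_length A k. \<Sum>ys\<in>lists_of_length A (b * k). f (xs @ ys))"
    unfolding sum_lists_of_length_Suc[OF finite_lists_of_length[OF assms]] concat.simps
    by (intro sum.cong refl Suc.IH)
  then show ?case
    by (simp add: sum_lists_of_length_add[OF assms])
qed simp

lemma power_sum_eq_sum_lists_of_length:
  fixes f :: "'a \<Rightarrow> 'b::comm_semiring_1"
  assumes "finite A"
  shows "(\<Sum>x\<in>A. f x) ^ b = (\<Sum>xs\<in>lists_of_length A b. prod_list (map f xs))"
proof (induction b)
  case (Suc b)
  then show ?case
    by (simp add: sum_lists_of_length_Suc[OF assms] sum_distrib_left sum_distrib_right
        sum.swap[of _ A] mult.commute)
qed simp

definition new_vertex_weight :: "nat \<Rightarrow> real \<Rightarrow> 'a set \<Rightarrow> 'a set \<Rightarrow> real" where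
  "new_vertex_weight V r A B = (if card B \<le> V then r ^ (card B - card A) else 0)"

lemma new_vertex_weight_nonneg: "0 \<le> r \<Longrightarrow> 0 \<le> new_vertex_weight V r A B"
  by (simp add: new_vertex_weight_def)

lemma new_vertex_weight_trans:
  assumes "A \<subseteq> B" "B \<subseteq> C" "finite C"
  shows "new_vertex_weight V r A C = new_vertex_weight V r A B * new_vertex_weight V r B C"
proof -
  have "card A \<le> card B" "card B \<le> card C"
    using assms by (auto intro: card_mono rev_finite_subset)
  then show ?thesis by (auto simp: new_vertex_weight_def power_add[symmetric])
qed

lemma new_vertex_weight_le_scaled:
  assumes "1 \<le> \<theta>" "0 \<le> r"
  shows "new_vertex_weight V r A B \<le> \<theta> ^ (V - card A) * new_vertex_weight V (r / \<theta>) A B"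
proof (cases "card B \<le> V")
  case True
  have "r ^ (card B - card A) = \<theta> ^ (card B - card A) * (r / \<theta>) ^ (card B - card A)"
    using assms by (simp add: power_divide)
  also have "\<dots> \<le> \<theta> ^ (V - card A) * (r / \<theta>) ^ (card B - card A)"
    using assms True by (intro mult_right_mono power_increasing) auto
  finally show ?thesis using True by (simp add: new_vertex_weight_def)
qed (simp add: new_vertex_weight_def)

lemma sum_new_vertex_weight_Cons_le:
  assumes "finite A" "0 \<le> r"
    and sum_le: "\<And>A'. finite A' \<Longrightarrow> (\<Sum>xs\<in>Xs. new_vertex_weight V r A' (A' \<union> set xs)) \<le> B"
  shows "(\<Sum>xs\<in>Xs. new_vertex_weight V r A (A \<union> set (j # xs))) \<le> (if j \<in> A then B else r * B)"
proof (cases "j \<in> A")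
  case True
  then have "A \<union> set (j # xs) = A \<union> set xs" for xs by auto
  then show ?thesis using True sum_le[OF assms(1)] by simp
next
  case False
  have "new_vertex_weight V r A (A \<union> set (j # xs))
      \<le> r * new_vertex_weight V r (insert j A) (insert j A \<union> set xs)" for xs
  proof -
    have "new_vertex_weight V r A (A \<union> set (j # xs))
        = new_vertex_weight V r A (insert j A) * new_vertex_weight V r (insert j A) (insert j A \<union> set xs)"
      using assms(1) by (subst new_vertex_weight_trans[symmetric]) auto
    also have "\<dots> \<le> r * new_vertex_weight V r (insert j A) (insert j A \<union> set xs)"
      using False assms
      by (intro mult_right_mono new_vertex_weight_nonneg) (simp_all add: new_vertex_weight_def)
    finally show ?thesis .
  qed
  then have "(\<Sum>xs\<in>Xs. new_vertex_weight V r A (A \<union> set (j # xs)))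
      \<le> r * (\<Sum>xs\<in>Xs. new_vertex_weight V r (insert j A) (insert j A \<union> set xs))"
    unfolding sum_distrib_left by (intro sum_mono)
  also have "\<dots> \<le> r * B"
    using sum_le[of "insert j A"] assms by (intro mult_left_mono) auto
  finally show ?thesis using False by simp
qed

text \<open>A step to an old vertex has at most \<open>V\<close> choices, a step to a new vertex at most
  \<open>card D\<close> choices, each of weight \<open>r\<close>.\<close>

lemma sum_lists_of_length_new_vertex_weight_le:
  assumes "finite D" "finite A" "0 \<le> r"
  shows "(\<Sum>xs\<in>lists_of_length D k. new_vertex_weight V r A (A \<union> set xs))
       \<le> (real V + real (card D) * r) ^ k"
  using assms(2)
proof (induction k arbitrary: A)
  case 0
  show ?case by (simp add: new_vertex_weight_def)
next
  case (Suc k)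
  define B where "B = (real V + real (card D) * r) ^ k"
  have "0 \<le> B" unfolding B_def using assms(3) by simp
  show ?case
  proof (cases "card A \<le> V")
    case False
    have "new_vertex_weight V r A (A \<union> set xs) = 0" for xs
      using False card_mono[OF _ Un_upper1, of A "set xs"] Suc.prems
      by (simp add: new_vertex_weight_def)
    then show ?thesis using assms(3) by simp
  next
    case True
    have "(\<Sum>xs\<in>lists_of_length D (Suc k). new_vertex_weight V r A (A \<union> set xs))
        \<le> (\<Sum>j\<in>D. if j \<in> A then B else r * B)"
      unfolding sum_lists_of_length_Suc[OF assms(1)]
      using sum_new_vertex_weight_Cons_le[OF Suc.prems assms(3) Suc.IH[folded B_def]]
      by (intro sum_mono)
    also have "\<dots> \<le> (\<Sum>j\<in>D. (if j \<in> A then B else 0) + r * B)"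
      using \<open>0 \<le> B\<close> assms(3) by (intro sum_mono) auto
    also have "\<dots> = real (card (D \<inter> A)) * B + real (card D) * r * B"
      using assms(1) by (simp add: sum.distrib sum.If_cases)
    also have "\<dots> \<le> real V * B + real (card D) * r * B"
      using True card_mono[OF Suc.prems, of "D \<inter> A"] \<open>0 \<le> B\<close>
      by (intro add_right_mono mult_right_mono) auto
    also have "\<dots> = (real V + real (card D) * r) ^ Suc k"
      by (simp add: B_def algebra_simps)
    finally show ?thesis .
  qed
qed

section \<open>Moments of the entries\<close>

lemma set_pmf_entry_pmf_subset: "set_pmf (entry_pmf q) \<subseteq> {1 - q, - q}"
  unfolding entry_pmf_def by auto

lemma finite_set_pmf_entry_pmf: "finite (set_pmf (entry_pmf q))"
  using set_pmf_entry_pmf_subset by (rule finite_subset) auto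

lemma entry_pmf_moment:
  assumes "0 \<le> q" "q \<le> 1"
  shows "measure_pmf.expectation (entry_pmf q) (\<lambda>z. z ^ c) = q * (1 - q) ^ c + (1 - q) * (- q) ^ c"
  using assms unfolding entry_pmf_def by simp

lemma abs_entry_pmf_moment_le:
  assumes "0 \<le> q" "q \<le> 1" "1 \<le> c"
  shows "\<bar>measure_pmf.expectation (entry_pmf q) (\<lambda>z. z ^ c)\<bar> \<le> q"
proof (cases "c = 1")
  case True
  then show ?thesis using entry_pmf_moment[OF assms(1,2), of 1] assms by simp
next
  case False
  then have "2 \<le> c" using assms(3) by simp
  have "\<bar>q * (1 - q) ^ c + (1 - q) * (- q) ^ c\<bar> \<le> q * (1 - q) ^ c + (1 - q) * q ^ c"
    using assms by (simp add: abs_mult power_abs abs_triangle_ineq[THEN order_trans])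
  also have "\<dots> \<le> q * (1 - q) ^ 2 + (1 - q) * q ^ 2"
    using assms \<open>2 \<le> c\<close> by (intro add_mono mult_left_mono power_decreasing) auto
  also have "\<dots> \<le> q"
    using assms by (simp add: power2_eq_square algebra_simps)
  finally show ?thesis using assms by (simp add: entry_pmf_moment)
qed

lemma expectation_prod_Pi_pmf_finite:
  fixes g :: "'a \<Rightarrow> 'b \<Rightarrow> real"
  assumes fin: "finite A" and fin_set: "\<And>x. x \<in> A \<Longrightarrow> finite (set_pmf (p x))"
  shows "measure_pmf.expectation (Pi_pmf A d p) (\<lambda>X. \<Prod>x\<in>A. g x (X x))
       = (\<Prod>x\<in>A. measure_pmf.expectation (p x) (g x))"
proof -
  have "finite (set_pmf (Pi_pmf A d p))"
    using fin fin_set by (subst set_Pi_pmf[OF fin]) (intro finite_PiE_dflt, auto)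
  moreover have "prob_space.indep_vars (measure_pmf (Pi_pmf A d p)) (\<lambda>_. borel) (\<lambda>x X. g x (X x)) A"
    by (intro prob_space.indep_vars_compose2[OF measure_pmf.prob_space_axioms indep_vars_Pi_pmf[OF fin]])
      auto
  ultimately have "measure_pmf.expectation (Pi_pmf A d p) (\<lambda>X. \<Prod>x\<in>A. g x (X x))
      = (\<Prod>x\<in>A. measure_pmf.expectation (Pi_pmf A d p) (\<lambda>X. g x (X x)))"
    by (intro prob_space.indep_vars_lebesgue_integral[OF measure_pmf.prob_space_axioms fin]
        integrable_measure_pmf_finite)
  also have "\<dots> = (\<Prod>x\<in>A. measure_pmf.expectation (p x) (g x))"
  proof (rule prod.cong[OF refl])
    fix x assume "x \<in> A"
    have "measure_pmf.expectation (Pi_pmf A d p) (\<lambda>X. g x (X x))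
        = measure_pmf.expectation (map_pmf (\<lambda>X. X x) (Pi_pmf A d p)) (g x)"
      by simp
    also have "\<dots> = measure_pmf.expectation (p x) (g x)"
      using \<open>x \<in> A\<close> by (simp add: Pi_pmf_component[OF fin])
    finally show "measure_pmf.expectation (Pi_pmf A d p) (\<lambda>X. g x (X x))
        = measure_pmf.expectation (p x) (g x)" .
  qed
  finally show ?thesis .
qed

lemma finite_upper_idx: "finite (upper_idx n)"
  by (rule finite_subset[of _ "{..<n} \<times> {..<n}"]) (auto simp: upper_idx_def)

lemma finite_set_pmf_entries_pmf: "finite (set_pmf (entries_pmf n P))"
  unfolding entries_pmf_def
  by (subst set_Pi_pmf[OF finite_upper_idx])
    (auto intro!: finite_PiE_dflt finite_upper_idx simp: finite_set_pmf_entry_pmf split: prod.splits)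

lemma expectation_entries_prod_list:
  assumes "set es \<subseteq> upper_idx n"
  shows "measure_pmf.expectation (entries_pmf n P) (\<lambda>X. prod_list (map X es))
       = (\<Prod>e\<in>upper_idx n. measure_pmf.expectation (entry_pmf (P (fst e) (snd e)))
            (\<lambda>z. z ^ count_list es e))"
proof -
  have "prod_list (map X es) = (\<Prod>e\<in>upper_idx n. X e ^ count_list es e)" for X :: "nat \<times> nat \<Rightarrow> real"
    using assms finite_upper_idx by (rule prod_list_map_eq_prod_count)
  then show ?thesis
    unfolding entries_pmf_def case_prod_beta
    by (simp add: expectation_prod_Pi_pmf_finite[where g = "\<lambda>e z. z ^ count_list es e"]
        finite_upper_idx finite_set_pmf_entry_pmf)
qed

lemma abs_expectation_entries_prod_list_le:
  assumes P_le: "\<forall>i<n. \<forall>j<n. 0 \<le> P i j \<and> P i j \<le> p" and "p \<le> 1"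
    and es: "set es \<subseteq> upper_idx n"
  shows "\<bar>measure_pmf.expectation (entries_pmf n P) (\<lambda>X. prod_list (map X es))\<bar> \<le> p ^ card (set es)"
proof -
  have "\<bar>measure_pmf.expectation (entry_pmf (P (fst e) (snd e))) (\<lambda>z. z ^ count_list es e)\<bar>
      \<le> (if e \<in> set es then p else 1)" if "e \<in> upper_idx n" for e
  proof (cases "e \<in> set es")
    case True
    then have "1 \<le> count_list es e" by (simp add: Suc_le_eq) (metis count_list_0_iff gr0I)
    moreover have "0 \<le> P (fst e) (snd e)" "P (fst e) (snd e) \<le> p"
      using that P_le by (auto simp: upper_idx_def)
    ultimately show ?thesis
      using True \<open>p \<le> 1\<close> abs_entry_pmf_moment_le[of "P (fst e) (snd e)" "count_list es e"] by simp
  qed (simp add: count_list_0_iff)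
  then have "\<bar>measure_pmf.expectation (entries_pmf n P) (\<lambda>X. prod_list (map X es))\<bar>
      \<le> (\<Prod>e\<in>upper_idx n. if e \<in> set es then p else 1)"
    unfolding expectation_entries_prod_list[OF es] abs_prod by (intro prod_mono) auto
  also have "\<dots> = p ^ card (set es)"
    using es by (simp add: prod.If_cases finite_upper_idx Int_absorb1)
  finally show ?thesis .
qed

lemma expectation_entries_prod_list_eq_0:
  assumes P_le: "\<forall>i<n. \<forall>j<n. 0 \<le> P i j \<and> P i j \<le> 1"
    and es: "set es \<subseteq> upper_idx n" and "count_list es e = 1"
  shows "measure_pmf.expectation (entries_pmf n P) (\<lambda>X. prod_list (map X es)) = 0"
proof -
  have "e \<in> upper_idx n" using assms(3) es by (metis count_notin subsetD zero_neq_one)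
  then have "measure_pmf.expectation (entry_pmf (P (fst e) (snd e))) (\<lambda>z. z ^ count_list es e) = 0"
    using P_le assms(3) entry_pmf_moment[of "P (fst e) (snd e)" 1] by (auto simp: upper_idx_def)
  then show ?thesis
    unfolding expectation_entries_prod_list[OF es]
    using \<open>e \<in> upper_idx n\<close> finite_upper_idx by (intro prod_zero) auto
qed

section \<open>Walk expansion and moments\<close>

text \<open>A walk \<open>u, x\<^sub>1, \<dots>, x\<^sub>k\<close> is given by the list \<open>[x\<^sub>1, \<dots>, x\<^sub>k]\<close>; its edges are
  normalised to the index pairs \<open>(min, max)\<close> of the independent entries.\<close>

fun walk_edges :: "nat \<Rightarrow> nat list \<Rightarrow> (nat \<times> nat) list" where
  "walk_edges u [] = []"
| "walk_edges u (j # xs) = (min u j, max u j) # walk_edges j xs"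

definition walk_weight :: "(nat \<times> nat \<Rightarrow> real) \<Rightarrow> nat \<Rightarrow> (nat \<Rightarrow> real) \<Rightarrow> nat list \<Rightarrow> real" where
  "walk_weight X u w xs = prod_list (map X (walk_edges u xs)) * w (last (u # xs))"

lemma walk_weight_Nil [simp]: "walk_weight X u w [] = w u"
  by (simp add: walk_weight_def)

lemma walk_weight_Cons [simp]: "walk_weight X u w (j # xs) = sym_mat X u j * walk_weight X j w xs"
  by (simp add: walk_weight_def sym_mat_def)

lemma length_walk_edges [simp]: "length (walk_edges u xs) = length xs"
  by (induction xs arbitrary: u) auto

lemma set_walk_edges_subset_upper_idx:
  "u < n \<Longrightarrow> set xs \<subseteq> {..<n} \<Longrightarrow> set (walk_edges u xs) \<subseteq> upper_idx n"
  by (induction xs arbitrary: u) (auto simp: upper_idx_def)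

lemma set_walk_edges_subset: "set (walk_edges u xs) \<subseteq> insert u (set xs) \<times> insert u (set xs)"
  by (induction xs arbitrary: u) (auto simp: min_def max_def)

lemma funpow_mat_vec_eq_sum_walks:
  "(mat_vec n (sym_mat X) ^^ k) w u = (\<Sum>xs\<in>lists_of_length {..<n} k. walk_weight X u w xs)"
proof (induction k arbitrary: u)
  case (Suc k)
  have "(mat_vec n (sym_mat X) ^^ Suc k) w u = (\<Sum>j<n. sym_mat X u j * (mat_vec n (sym_mat X) ^^ k) w j)"
    by (simp add: mat_vec_def)
  then show ?case
    by (simp add: Suc.IH sum_distrib_left sum_lists_of_length_Suc)
qed simp

lemma card_walk_vertices_le:
  assumes "u \<in> A" "E \<subseteq> A \<times> A" "finite A" "finite E"
  shows "card (A \<union> set xs) + card E \<le> card A + card (E \<union> set (walk_edges u xs))"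
  using assms
proof (induction xs arbitrary: u A E)
  case (Cons j xs)
  define A' where "A' = insert j A"
  define E' where "E' = insert (min u j, max u j) E"
  have "j \<in> A'" "E' \<subseteq> A' \<times> A'" "finite A'" "finite E'"
    using Cons.prems by (auto simp: A'_def E'_def min_def max_def)
  then have IH: "card (A' \<union> set xs) + card E' \<le> card A' + card (E' \<union> set (walk_edges j xs))"
    by (rule Cons.IH)
  have "card A' + card E \<le> card A + card E'"
  proof (cases "j \<in> A")
    case True
    then show ?thesis using Cons.prems by (simp add: A'_def E'_def insert_absorb card_insert_le)
  next
    case False
    then have "(min u j, max u j) \<notin> E" using Cons.prems by (auto simp: min_def max_def)
    then show ?thesis using False Cons.prems by (simp add: A'_def E'_def)
  qed
  moreover have "A \<union> set (j # xs) = A' \<union> set xs"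
    and "E \<union> set (walk_edges u (j # xs)) = E' \<union> set (walk_edges j xs)"
    by (auto simp: A'_def E'_def)
  ultimately show ?case using IH by simp
qed simp

lemma card_walks_vertices_le:
  assumes "u \<in> A" "E \<subseteq> A \<times> A" "finite A" "finite E"
  shows "card (A \<union> set (concat gs)) + card E \<le> card A + card (E \<union> set (concat (map (walk_edges u) gs)))"
  using assms
proof (induction gs arbitrary: A E)
  case (Cons xs gs)
  define A' where "A' = A \<union> set xs"
  define E' where "E' = E \<union> set (walk_edges u xs)"
  have "E' \<subseteq> A' \<times> A'"
    using Cons.prems set_walk_edges_subset[of u xs] by (auto simp: A'_def E'_def)
  then have IH: "card (A' \<union> set (concat gs)) + card E' \<le> card A' + card (E' \<union> set (concat (map (walk_edges u) gs)))"
    using Cons.IH[of A' E'] Cons.prems by (auto simp: A'_def E'_def)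
  moreover have "card A' + card E \<le> card A + card E'"
    using card_walk_vertices_le[OF Cons.prems] by (simp add: A'_def E'_def)
  moreover have "A \<union> set (concat (xs # gs)) = A' \<union> set (concat gs)"
    and "E \<union> set (concat (map (walk_edges u) (xs # gs))) = E' \<union> set (concat (map (walk_edges u) gs))"
    by (auto simp: A'_def E'_def)
  ultimately show ?case by simp
qed simp

lemma prod_list_map_walk_weight:
  "prod_list (map (walk_weight X u w) gs)
   = prod_list (map X (concat (map (walk_edges u) gs))) * prod_list (map (\<lambda>xs. w (last (u # xs))) gs)"
  by (induction gs) (simp_all add: walk_weight_def)

lemma length_concat_map_walk_edges:
  "gs \<in> lists_of_length (lists_of_length A k) b \<Longrightarrow> length (concat (map (walk_edges u) gs)) = b * k"
  unfolding lists_of_length_def by (induction gs arbitrary: b) auto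

lemma abs_expectation_walk_edges_le:
  assumes P_le: "\<forall>i<n. \<forall>j<n. 0 \<le> P i j \<and> P i j \<le> p" and "p \<le> 1" and "u < n"
    and gs: "gs \<in> lists_of_length (lists_of_length {..<n} k) (2 * m)"
  shows "\<bar>measure_pmf.expectation (entries_pmf n P) (\<lambda>X. prod_list (map X (concat (map (walk_edges u) gs))))\<bar>
       \<le> new_vertex_weight (m * k + 1) p {u} (insert u (set (concat gs)))"
proof -
  define es where "es = concat (map (walk_edges u) gs)"
  have "0 \<le> p" using P_le \<open>u < n\<close> by (meson order.trans)
  have es_upper: "set es \<subseteq> upper_idx n"
    using gs set_walk_edges_subset_upper_idx[OF \<open>u < n\<close>]
    by (fastforce simp: es_def lists_of_length_def)
  txt \<open>An entry occurring exactly once has mean zero. Otherwise there are at most \<open>m k\<close>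
    distinct edges, and since all walks start at \<open>u\<close>, at most \<open>m k + 1\<close> vertices.\<close>
  show ?thesis
  proof (cases "\<exists>e\<in>set es. count_list es e = 1")
    case True
    have "\<forall>i<n. \<forall>j<n. 0 \<le> P i j \<and> P i j \<le> 1" using P_le \<open>p \<le> 1\<close> by force
    with True have "measure_pmf.expectation (entries_pmf n P) (\<lambda>X. prod_list (map X es)) = 0"
      using expectation_entries_prod_list_eq_0[OF _ es_upper] by blast
    then show ?thesis using \<open>0 \<le> p\<close> by (simp add: es_def new_vertex_weight_nonneg)
  next
    case False
    then have "card (set es) \<le> m * k"
      using two_mul_card_set_le_length[of es] length_concat_map_walk_edges[OF gs] by (simp add: es_def)
    moreover have "card (insert u (set (concat gs))) \<le> card (set es) + 1"
      using card_walks_vertices_le[of u "{u}" "{}" gs] by (simp add: es_def)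
    ultimately have "p ^ card (set es) \<le> new_vertex_weight (m * k + 1) p {u} (insert u (set (concat gs)))"
      using \<open>0 \<le> p\<close> \<open>p \<le> 1\<close> by (auto simp: new_vertex_weight_def intro!: power_decreasing)
    with abs_expectation_entries_prod_list_le[OF P_le \<open>p \<le> 1\<close> es_upper] show ?thesis
      by (simp add: es_def)
  qed
qed

lemma abs_expectation_walk_weights_le:
  assumes P_le: "\<forall>i<n. \<forall>j<n. 0 \<le> P i j \<and> P i j \<le> p" and "p \<le> 1" and "u < n"
    and w: "\<forall>i<n. \<bar>w i\<bar> \<le> W"
    and gs: "gs \<in> lists_of_length (lists_of_length {..<n} k) (2 * m)"
  shows "\<bar>measure_pmf.expectation (entries_pmf n P) (\<lambda>X. prod_list (map (walk_weight X u w) gs))\<bar>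
       \<le> W ^ (2 * m) * new_vertex_weight (m * k + 1) p {u} (insert u (set (concat gs)))"
proof -
  define c where "c = prod_list (map (\<lambda>xs. w (last (u # xs))) gs)"
  have "0 \<le> W" using w \<open>u < n\<close> by (meson abs_ge_zero order.trans)
  have "\<bar>c\<bar> \<le> W ^ length gs"
    unfolding c_def
  proof (rule abs_prod_list_map_le)
    fix xs assume "xs \<in> set gs"
    then have "set (u # xs) \<subseteq> {..<n}" using gs \<open>u < n\<close> by (auto simp: lists_of_length_def)
    then have "last (u # xs) < n" using last_in_set[of "u # xs"] by auto
    then show "\<bar>w (last (u # xs))\<bar> \<le> W" using w by simp
  qed
  then have "\<bar>c\<bar> \<le> W ^ (2 * m)" using gs by (simp add: lists_of_length_def)
  then show ?thesis
    unfolding prod_list_map_walk_weight c_def[symmetric] mult.commute[of _ c]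
      Bochner_Integration.integral_mult_right_zero abs_mult
    using abs_expectation_walk_edges_le[OF P_le \<open>p \<le> 1\<close> \<open>u < n\<close> gs] \<open>0 \<le> W\<close>
    by (intro mult_mono) auto
qed

lemma expectation_walk_sum_even_power_le_scaled:
  assumes P_le: "\<forall>i<n. \<forall>j<n. 0 \<le> P i j \<and> P i j \<le> p" and "p \<le> 1" and "u < n"
    and w: "\<forall>i<n. \<bar>w i\<bar> \<le> W" and "1 \<le> \<theta>"
  shows "measure_pmf.expectation (entries_pmf n P) (\<lambda>X. ((mat_vec n (sym_mat X) ^^ k) w u) ^ (2 * m))
       \<le> W ^ (2 * m) * \<theta> ^ (m * k) * (real (m * k + 1) + real n * (p / \<theta>)) ^ (2 * m * k)"
proof -
  define D where "D = lists_of_length {..<n} k"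
  define vw where "vw = (\<lambda>r xs. new_vertex_weight (m * k + 1) r {u} (insert u (set xs)))"
  have "0 \<le> p" "0 \<le> W" using P_le w \<open>u < n\<close> by (meson abs_ge_zero order.trans)+
  have "measure_pmf.expectation (entries_pmf n P) (\<lambda>X. ((mat_vec n (sym_mat X) ^^ k) w u) ^ (2 * m))
      = (\<Sum>gs\<in>lists_of_length D (2 * m).
          measure_pmf.expectation (entries_pmf n P) (\<lambda>X. prod_list (map (walk_weight X u w) gs)))"
    unfolding funpow_mat_vec_eq_sum_walks D_def
    by (simp add: power_sum_eq_sum_lists_of_length finite_lists_of_length
        Bochner_Integration.integral_sum integrable_measure_pmf_finite finite_set_pmf_entries_pmf)
  also have "\<dots> \<le> (\<Sum>gs\<in>lists_of_length D (2 * m). W ^ (2 * m) * vw p (concat gs))"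
  proof (rule sum_mono)
    fix gs assume "gs \<in> lists_of_length D (2 * m)"
    then have "\<bar>measure_pmf.expectation (entries_pmf n P) (\<lambda>X. prod_list (map (walk_weight X u w) gs))\<bar>
        \<le> W ^ (2 * m) * vw p (concat gs)"
      unfolding vw_def D_def by (rule abs_expectation_walk_weights_le[OF P_le \<open>p \<le> 1\<close> \<open>u < n\<close> w])
    then show "measure_pmf.expectation (entries_pmf n P) (\<lambda>X. prod_list (map (walk_weight X u w) gs))
        \<le> W ^ (2 * m) * vw p (concat gs)"
      by (rule abs_le_D1)
  qed
  also have "\<dots> \<le> (\<Sum>gs\<in>lists_of_length D (2 * m). W ^ (2 * m) * (\<theta> ^ (m * k) * vw (p / \<theta>) (concat gs)))"
    using new_vertex_weight_le_scaled[OF \<open>1 \<le> \<theta>\<close> \<open>0 \<le> p\<close>, of "m * k + 1" "{u}"] \<open>0 \<le> W\<close>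
    unfolding vw_def by (intro sum_mono mult_left_mono) simp_all
  also have "\<dots> = W ^ (2 * m) * \<theta> ^ (m * k) * (\<Sum>xs\<in>lists_of_length {..<n} (2 * m * k). vw (p / \<theta>) xs)"
    unfolding D_def sum_lists_of_length_concat[OF finite_lessThan, where f = "vw (p / \<theta>)", symmetric]
    by (simp add: sum_distrib_left mult.assoc)
  also have "\<dots> \<le> W ^ (2 * m) * \<theta> ^ (m * k) * (real (m * k + 1) + real n * (p / \<theta>)) ^ (2 * m * k)"
    using sum_lists_of_length_new_vertex_weight_le[of "{..<n}" "{u}" "p / \<theta>" "m * k + 1" "2 * m * k"]
      \<open>0 \<le> p\<close> \<open>1 \<le> \<theta>\<close> \<open>0 \<le> W\<close>
    unfolding vw_def by (intro mult_left_mono) simp_all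
  finally show ?thesis .
qed

lemma expectation_walk_sum_even_power_le:
  assumes P_le: "\<forall>i<n. \<forall>j<n. 0 \<le> P i j \<and> P i j \<le> p" and "p \<le> 1" and "u < n"
    and w: "\<forall>i<n. \<bar>w i\<bar> \<le> W"
  shows "measure_pmf.expectation (entries_pmf n P) (\<lambda>X. ((mat_vec n (sym_mat X) ^^ k) w u) ^ (2 * m))
       \<le> W ^ (2 * m) * (4 * (real (m * k) + 1) * (real n * p + real (m * k) + 1)) ^ (m * k)"
proof -
  define L where "L = m * k"
  txt \<open>This \<open>\<theta>\<close> makes \<open>n p / \<theta> \<le> L + 1\<close> and \<open>\<theta> (L + 1) = n p + L + 1\<close>.\<close>
  define \<theta> where "\<theta> = (real n * p + L + 1) / (L + 1)"
  have "0 \<le> p" "0 \<le> W" using P_le w \<open>u < n\<close> by (meson abs_ge_zero order.trans)+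
  have "1 \<le> \<theta>" unfolding \<theta>_def using \<open>0 \<le> p\<close> by (simp add: field_simps)
  have "real n * p * (L + 1) \<le> (real n * p + L + 1) * (L + 1)"
    using \<open>0 \<le> p\<close> by (intro mult_right_mono) auto
  then have "real n * (p / \<theta>) \<le> real L + 1"
    unfolding \<theta>_def using \<open>0 \<le> p\<close> by (simp add: field_simps add_pos_nonneg)
  have "measure_pmf.expectation (entries_pmf n P) (\<lambda>X. ((mat_vec n (sym_mat X) ^^ k) w u) ^ (2 * m))
      \<le> W ^ (2 * m) * \<theta> ^ L * (real (L + 1) + real n * (p / \<theta>)) ^ (2 * L)"
    using expectation_walk_sum_even_power_le_scaled[OF P_le \<open>p \<le> 1\<close> \<open>u < n\<close> w \<open>1 \<le> \<theta>\<close>, of k m]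
    by (simp add: L_def mult.assoc)
  also have "\<dots> \<le> W ^ (2 * m) * \<theta> ^ L * (2 * (real L + 1)) ^ (2 * L)"
    using \<open>real n * (p / \<theta>) \<le> real L + 1\<close> \<open>0 \<le> p\<close> \<open>1 \<le> \<theta>\<close> \<open>0 \<le> W\<close>
    by (intro mult_left_mono power_mono) auto
  also have "\<dots> = W ^ (2 * m) * (\<theta> * (2 * (real L + 1))\<^sup>2) ^ L"
    by (simp add: power_mult power_mult_distrib mult.assoc)
  also have "\<theta> * (2 * (real L + 1))\<^sup>2 = 4 * (real L + 1) * (real n * p + real L + 1)"
    unfolding \<theta>_def by (simp add: power2_eq_square field_simps)
  finally show ?thesis by (simp add: L_def)
qed

section \<open>Frobenius norms of matrix powers\<close>

definition sq_norm :: "nat \<Rightarrow> (nat \<Rightarrow> real) \<Rightarrow> real" where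
  "sq_norm n v = (\<Sum>i<n. (v i)\<^sup>2)"

definition frob_sq :: "nat \<Rightarrow> (nat \<Rightarrow> nat \<Rightarrow> real) \<Rightarrow> real" where
  "frob_sq n B = (\<Sum>i<n. \<Sum>j<n. (B i j)\<^sup>2)"

definition mat_pow :: "nat \<Rightarrow> (nat \<Rightarrow> nat \<Rightarrow> real) \<Rightarrow> nat \<Rightarrow> nat \<Rightarrow> nat \<Rightarrow> real" where
  "mat_pow n A l i j = (mat_vec n A ^^ l) (\<lambda>t. if t = j then 1 else 0) i"

lemma sq_norm_nonneg: "0 \<le> sq_norm n v"
  by (simp add: sq_norm_def sum_nonneg)

lemma frob_sq_nonneg: "0 \<le> frob_sq n B"
  by (simp add: frob_sq_def sum_nonneg)

lemma funpow_mat_vec_eq_mat_pow: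
  "i < n \<Longrightarrow> (mat_vec n A ^^ l) v i = mat_vec n (mat_pow n A l) v i"
proof (induction l arbitrary: i)
  case 0
  have "mat_vec n (mat_pow n A 0) v i = (\<Sum>j<n. if i = j then v j else 0)"
    unfolding mat_vec_def mat_pow_def by (intro sum.cong) auto
  then show ?case using 0 by simp
next
  case (Suc l)
  have "(mat_vec n A ^^ Suc l) v i = (\<Sum>t<n. A i t * (\<Sum>j<n. mat_pow n A l t j * v j))"
    by (simp add: mat_vec_def Suc.IH)
  also have "\<dots> = (\<Sum>j<n. (\<Sum>t<n. A i t * mat_pow n A l t j) * v j)"
    unfolding sum_distrib_left sum_distrib_right mult.assoc by (rule sum.swap)
  also have "\<dots> = mat_vec n (mat_pow n A (Suc l)) v i"
    by (simp add: mat_vec_def mat_pow_def)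
  finally show ?case .
qed

lemma sq_norm_mat_vec_le: "sq_norm n (mat_vec n B v) \<le> frob_sq n B * sq_norm n v"
proof -
  have "sq_norm n (mat_vec n B v) \<le> (\<Sum>i<n. (\<Sum>j<n. (B i j)\<^sup>2) * (\<Sum>j<n. (v j)\<^sup>2))"
    unfolding sq_norm_def mat_vec_def by (intro sum_mono Cauchy_Schwarz_ineq_sum)
  then show ?thesis by (simp add: frob_sq_def sq_norm_def sum_distrib_right)
qed

lemma sq_norm_funpow_mat_vec_le:
  "sq_norm n ((mat_vec n A ^^ l) v) \<le> frob_sq n (mat_pow n A l) * sq_norm n v"
proof -
  have "sq_norm n ((mat_vec n A ^^ l) v) = sq_norm n (mat_vec n (mat_pow n A l) v)"
    unfolding sq_norm_def by (simp add: funpow_mat_vec_eq_mat_pow)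
  then show ?thesis using sq_norm_mat_vec_le by simp
qed

text \<open>Every \<open>k \<ge> J\<close> is a sum of lengths in \<open>[J, 2 J)\<close>.\<close>

lemma funpow_le_of_block_bounds:
  fixes f :: "'a \<Rightarrow> 'a" and N :: "'a \<Rightarrow> real"
  assumes "1 \<le> J" "0 \<le> \<beta>"
    and block: "\<And>l v. J \<le> l \<Longrightarrow> l < 2 * J \<Longrightarrow> N ((f ^^ l) v) \<le> \<beta> ^ l * N v"
    and "J \<le> k"
  shows "N ((f ^^ k) v) \<le> \<beta> ^ k * N v"
  using \<open>J \<le> k\<close>
proof (induction k arbitrary: v rule: less_induct)
  case (less k)
  show ?case
  proof (cases "k < 2 * J")
    case True
    then show ?thesis using block less.prems by auto
  next
    case False
    then have k: "k = J + (k - J)" by simp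
    have "N ((f ^^ k) v) = N ((f ^^ J) ((f ^^ (k - J)) v))"
      by (subst k) (simp add: funpow_add)
    also have "\<dots> \<le> \<beta> ^ J * N ((f ^^ (k - J)) v)"
      using block assms(1) by simp
    also have "\<dots> \<le> \<beta> ^ J * (\<beta> ^ (k - J) * N v)"
      using less.IH[of "k - J" v] False assms by (intro mult_left_mono) auto
    also have "\<dots> = \<beta> ^ k * N v"
      using k by (metis power_add mult.assoc)
    finally show ?thesis .
  qed
qed

lemma funpow_mat_vec_sq_le_of_frob_sq_le:
  assumes "1 \<le> J" "0 \<le> \<beta>" "J \<le> k" "u < n" "sq_norm n w \<le> 1"
    and frob: "\<And>l. J \<le> l \<Longrightarrow> l < 2 * J \<Longrightarrow> frob_sq n (mat_pow n A l) \<le> \<beta> ^ l"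
  shows "((mat_vec n A ^^ k) w u)\<^sup>2 \<le> \<beta> ^ k"
proof -
  have block: "sq_norm n ((mat_vec n A ^^ l) v) \<le> \<beta> ^ l * sq_norm n v" if "J \<le> l" "l < 2 * J" for l v
    using sq_norm_funpow_mat_vec_le[where n = n and A = A and l = l and v = v] frob[OF that] sq_norm_nonneg[of n v]
    by (meson mult_right_mono order_trans)
  have "sq_norm n ((mat_vec n A ^^ k) w) \<le> \<beta> ^ k * sq_norm n w"
    using funpow_le_of_block_bounds[where N = "sq_norm n", OF assms(1,2) block assms(3)] .
  also have "\<dots> \<le> \<beta> ^ k"
    using assms(2,5) sq_norm_nonneg[of n w] by (simp add: mult_left_le)
  finally show ?thesis
    using \<open>u < n\<close> unfolding sq_norm_def
    by (meson finite_lessThan lessThan_iff member_le_sum order_trans zero_le_power2)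
qed

lemma expectation_frob_sq_mat_pow_le:
  assumes P_le: "\<forall>i<n. \<forall>j<n. 0 \<le> P i j \<and> P i j \<le> p" and "p \<le> 1"
  shows "measure_pmf.expectation (entries_pmf n P) (\<lambda>X. frob_sq n (mat_pow n (sym_mat X) l))
       \<le> real n * real n * (4 * (real l + 1) * (real n * p + real l + 1)) ^ l"
proof -
  have "measure_pmf.expectation (entries_pmf n P) (\<lambda>X. frob_sq n (mat_pow n (sym_mat X) l))
      = (\<Sum>i<n. \<Sum>j<n. measure_pmf.expectation (entries_pmf n P)
          (\<lambda>X. ((mat_vec n (sym_mat X) ^^ l) (\<lambda>t. if t = j then 1 else 0) i) ^ (2 * 1)))"
    unfolding frob_sq_def mat_pow_def
    by (simp add: Bochner_Integration.integral_sum integrable_measure_pmf_finite finite_set_pmf_entries_pmf)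
  also have "\<dots> \<le> (\<Sum>i<n. \<Sum>j<n. (4 * (real l + 1) * (real n * p + real l + 1)) ^ l)"
    using expectation_walk_sum_even_power_le[OF P_le \<open>p \<le> 1\<close>, where W = 1 and m = 1 and k = l]
    by (intro sum_mono) simp
  finally show ?thesis by simp
qed

section \<open>Tail bounds\<close>

lemma prob_le_expectation_divide:
  fixes f :: "'a \<Rightarrow> real"
  assumes "finite (set_pmf M)" "0 < c" "\<And>x. 0 \<le> f x"
  shows "measure_pmf.prob M {x. c \<le> f x} \<le> measure_pmf.expectation M f / c"
  using integral_Markov_inequality_measure[of M f UNIV c] integrable_measure_pmf_finite[OF assms(1)] assms
  by auto

lemma prob_abs_gt_le_even_moment:
  fixes f :: "'a \<Rightarrow> real"
  assumes "finite (set_pmf M)" "0 < T"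
  shows "measure_pmf.prob M {x. T < \<bar>f x\<bar>} \<le> measure_pmf.expectation M (\<lambda>x. f x ^ (2 * m)) / T ^ (2 * m)"
proof -
  have "T ^ (2 * m) \<le> f x ^ (2 * m)" if "T < \<bar>f x\<bar>" for x
  proof -
    have "T ^ (2 * m) \<le> \<bar>f x\<bar> ^ (2 * m)" using that assms(2) by (intro power_mono) auto
    then show ?thesis by (simp add: power_even_abs)
  qed
  then have "{x. T < \<bar>f x\<bar>} \<subseteq> {x. T ^ (2 * m) \<le> f x ^ (2 * m)}" by blast
  then have "measure_pmf.prob M {x. T < \<bar>f x\<bar>} \<le> measure_pmf.prob M {x. T ^ (2 * m) \<le> f x ^ (2 * m)}"
    by (rule measure_pmf.finite_measure_mono) simp
  also have "\<dots> \<le> measure_pmf.expectation M (\<lambda>x. f x ^ (2 * m)) / T ^ (2 * m)"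
    using assms by (intro prob_le_expectation_divide) (auto simp: zero_le_even_power)
  finally show ?thesis .
qed

lemma threshold_even_power_eq:
  assumes "0 \<le> y"
  shows "(c * (C * sqrt y) ^ k) ^ (2 * m) = c ^ (2 * m) * (C\<^sup>2 * y) ^ (m * k)"
proof -
  have "((C * sqrt y) ^ k) ^ (2 * m) = ((C * sqrt y)\<^sup>2) ^ (m * k)"
    unfolding power_mult[symmetric] by (simp add: mult_ac)
  then show ?thesis using assms by (simp add: power_mult_distrib)
qed

lemma sq_norm_le_1:
  assumes "0 < n" "\<forall>i<n. \<bar>w i\<bar> \<le> 1 / sqrt (real n)"
  shows "sq_norm n w \<le> 1"
proof -
  have "(w i)\<^sup>2 \<le> (1 / sqrt (real n))\<^sup>2" if "i < n" for i
    using assms(2) that by (simp add: abs_le_square_iff[symmetric])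
  then have "sq_norm n w \<le> real n * (1 / sqrt (real n))\<^sup>2"
    unfolding sq_norm_def using sum_bounded_above[of "{..<n}" "\<lambda>i. (w i)\<^sup>2"] by simp
  then show ?thesis using assms(1) by (simp add: power_divide)
qed

lemma one_le_ln_of_ge_3: "3 \<le> n \<Longrightarrow> 1 \<le> ln (real n)"
  using exp_le by (subst ln_ge_iff) auto

lemma inverse_27_power_le_exp: "(1 / 27 :: real) ^ l \<le> exp (- 3 * real l)"
proof -
  have "exp (3 :: real) = exp 1 ^ 3" by (simp add: exp_of_nat_mult[symmetric])
  also have "\<dots> \<le> 3 ^ 3" using exp_le by (intro power_mono) auto
  finally have "(1 / 27 :: real) \<le> exp (-3)" by (simp add: exp_minus field_simps)
  then have "(1 / 27 :: real) ^ l \<le> exp (-3) ^ l" by (intro power_mono) auto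
  also have "\<dots> = exp (- 3 * real l)" by (simp add: exp_of_nat_mult[symmetric] mult.commute)
  finally show ?thesis .
qed

locale walk_tail_setting =
  fixes n :: nat and P :: "nat \<Rightarrow> nat \<Rightarrow> real" and p C :: real and J :: nat
  assumes n_ge_3: "3 \<le> n"
    and P_le: "\<forall>i<n. \<forall>j<n. 0 \<le> P i j \<and> P i j \<le> p" and p_le_1: "p \<le> 1"
    and dense: "10000 * ln (real n) \<le> real n * p"
    and C_ge: "4000 \<le> C"
    and J_ge: "C * ln (real n) \<le> real J" and J_le: "real J \<le> C * ln (real n) + 1"
begin

lemma ln_ge_1: "1 \<le> ln (real n)"
  using n_ge_3 by (rule one_le_ln_of_ge_3)

lemma p_pos: "0 < p"
  using dense ln_ge_1 n_ge_3 by (smt (verit) mult_nonneg_nonpos of_nat_0_le_iff)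

lemma moment_base_le:
  assumes "L \<le> 2 * J"
  shows "27 * (4 * (real L + 1) * (real n * p + real L + 1)) \<le> C\<^sup>2 * (real n * p * ln (real n)) / 4"
proof -
  define l where "l = ln (real n)"
  define np where "np = real n * p"
  have "1 \<le> l" using ln_ge_1 by (simp add: l_def)
  have "4000 \<le> C * l" using mult_mono[OF C_ge \<open>1 \<le> l\<close>] C_ge by simp
  have L: "real L + 1 \<le> 3 * C * l" using assms J_le \<open>4000 \<le> C * l\<close> unfolding l_def by linarith
  have "0 \<le> np" using p_pos by (simp add: np_def)
  have "16 * (real L + 1) * (np + real L + 1) \<le> 16 * (3 * C * l) * (np + 3 * C * l)"
    using L \<open>0 \<le> np\<close> by (intro mult_mono) auto
  also have "\<dots> = 48 * (C * l * np) + 144 * (C\<^sup>2 * l) * l"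
    by (simp add: algebra_simps power2_eq_square)
  also have "48 * (C * l * np) \<le> (C * l * np) * C / 54"
    using C_ge \<open>1 \<le> l\<close> \<open>0 \<le> np\<close> mult_left_mono[of 2592 C "C * l * np"] by simp
  also have "144 * (C\<^sup>2 * l) * l \<le> (C\<^sup>2 * l) * np / 54"
    using dense \<open>1 \<le> l\<close> mult_left_mono[of "7776 * l" np "C\<^sup>2 * l"] unfolding l_def np_def by simp
  also have "C * l * np * C / 54 + C\<^sup>2 * l * np / 54 = C\<^sup>2 * (np * l) / 27"
    by (simp add: algebra_simps power2_eq_square)
  finally show ?thesis by (simp add: l_def np_def algebra_simps)
qed

lemma prob_walk_sum_gt_le_of_lt:
  assumes "u < n" and w: "\<forall>i<n. \<bar>w i\<bar> \<le> 1 / sqrt (real n)" and "1 \<le> k" "k < J"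
  shows "measure_pmf.prob (entries_pmf n P)
      {X. \<bar>(mat_vec n (sym_mat X) ^^ k) w u\<bar> > 1 / sqrt (real n) * (C * sqrt (real n * p * ln (real n))) ^ k}
    \<le> exp (- C * ln (real n))"
proof -
  define a where "a = C\<^sup>2 * (real n * p * ln (real n))"
  define T where "T = 1 / sqrt (real n) * (C * sqrt (real n * p * ln (real n))) ^ k"
  define m where "m = J div k + 1"
  define L where "L = m * k"
  define B where "B = 4 * (real L + 1) * (real n * p + real L + 1)"
  have "L = J div k * k + k" by (simp add: L_def m_def)
  moreover have "J = J div k * k + J mod k" "J mod k < k" using \<open>1 \<le> k\<close> by simp_all
  ultimately have "J \<le> L" "L \<le> 2 * J" using \<open>k < J\<close> by linarith+
  have "0 < a" unfolding a_def using p_pos ln_ge_1 C_ge n_ge_3 by simp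
  have "0 < T" unfolding T_def using p_pos ln_ge_1 C_ge n_ge_3 by simp
  have T_pow: "T ^ (2 * m) = (1 / sqrt (real n)) ^ (2 * m) * a ^ L"
    unfolding T_def a_def L_def using p_pos ln_ge_1 by (intro threshold_even_power_eq) simp
  have "27 * B \<le> a" using moment_base_le[OF \<open>L \<le> 2 * J\<close>] \<open>0 < a\<close> by (simp add: a_def B_def)
  have "measure_pmf.prob (entries_pmf n P) {X. T < \<bar>(mat_vec n (sym_mat X) ^^ k) w u\<bar>}
      \<le> measure_pmf.expectation (entries_pmf n P) (\<lambda>X. ((mat_vec n (sym_mat X) ^^ k) w u) ^ (2 * m))
        / T ^ (2 * m)"
    by (rule prob_abs_gt_le_even_moment[OF finite_set_pmf_entries_pmf \<open>0 < T\<close>])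
  also have "\<dots> \<le> (1 / sqrt (real n)) ^ (2 * m) * B ^ L / T ^ (2 * m)"
    using expectation_walk_sum_even_power_le[OF P_le p_le_1 \<open>u < n\<close> w, of k m] \<open>0 < T\<close>
    by (intro divide_right_mono) (simp_all add: B_def L_def)
  also have "\<dots> = (B / a) ^ L"
    using n_ge_3 \<open>0 < a\<close> by (simp add: T_pow power_divide)
  also have "\<dots> \<le> (1 / 27) ^ L"
    using \<open>27 * B \<le> a\<close> \<open>0 < a\<close> p_pos by (intro power_mono) (simp_all add: B_def field_simps)
  also have "\<dots> \<le> exp (- 3 * real L)" by (rule inverse_27_power_le_exp)
  also have "\<dots> \<le> exp (- C * ln (real n))"
    using \<open>J \<le> L\<close> J_ge C_ge ln_ge_1 by simp
  finally show ?thesis unfolding T_def .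
qed

lemma prob_frob_sq_mat_pow_ge_le:
  assumes "J \<le> l" "l < 2 * J"
  shows "measure_pmf.prob (entries_pmf n P)
      {X. (C\<^sup>2 * (real n * p * ln (real n)) / 4) ^ l \<le> frob_sq n (mat_pow n (sym_mat X) l)}
    \<le> real n * real n * exp (- 3 * real J)"
proof -
  define \<beta> where "\<beta> = C\<^sup>2 * (real n * p * ln (real n)) / 4"
  define B where "B = 4 * (real l + 1) * (real n * p + real l + 1)"
  have "0 < \<beta>" unfolding \<beta>_def using p_pos ln_ge_1 C_ge n_ge_3 by simp
  have "27 * B \<le> \<beta>" using moment_base_le[of l] assms by (simp add: \<beta>_def B_def)
  have "measure_pmf.prob (entries_pmf n P) {X. \<beta> ^ l \<le> frob_sq n (mat_pow n (sym_mat X) l)}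
      \<le> measure_pmf.expectation (entries_pmf n P) (\<lambda>X. frob_sq n (mat_pow n (sym_mat X) l)) / \<beta> ^ l"
    using \<open>0 < \<beta>\<close> by (intro prob_le_expectation_divide finite_set_pmf_entries_pmf frob_sq_nonneg) simp
  also have "\<dots> \<le> real n * real n * B ^ l / \<beta> ^ l"
    using expectation_frob_sq_mat_pow_le[OF P_le p_le_1, of l] \<open>0 < \<beta>\<close>
    by (intro divide_right_mono) (simp_all add: B_def)
  also have "\<dots> = real n * real n * (B / \<beta>) ^ l" by (simp add: power_divide)
  also have "\<dots> \<le> real n * real n * (1 / 27) ^ l"
    using \<open>27 * B \<le> \<beta>\<close> \<open>0 < \<beta>\<close> p_pos
    by (intro mult_left_mono power_mono) (simp_all add: B_def field_simps)
  also have "\<dots> \<le> real n * real n * exp (- 3 * real J)"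
    using inverse_27_power_le_exp[of l] \<open>J \<le> l\<close>
    by (intro mult_left_mono) (auto intro: order_trans)
  finally show ?thesis by (simp add: \<beta>_def)
qed

lemma real_le_4_power: "J \<le> k \<Longrightarrow> real n \<le> 4 ^ k"
proof -
  assume "J \<le> k"
  have "1 * ln (real n) \<le> C * ln (real n)" using C_ge ln_ge_1 by (intro mult_right_mono) auto
  with J_ge \<open>J \<le> k\<close> have "ln (real n) \<le> real k" by linarith
  have "real n = exp (ln (real n))" using n_ge_3 by simp
  also have "\<dots> \<le> exp (real k)" using \<open>ln (real n) \<le> real k\<close> by simp
  also have "\<dots> = exp 1 ^ k" by (metis exp_of_nat_mult mult.right_neutral)
  also have "\<dots> \<le> 4 ^ k" using exp_le by (intro power_mono) auto
  finally show ?thesis .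
qed

lemma abs_funpow_mat_vec_le_of_frob_sq_le:
  assumes "u < n" and w: "\<forall>i<n. \<bar>w i\<bar> \<le> 1 / sqrt (real n)" and "J \<le> k"
    and frob: "\<And>l. J \<le> l \<Longrightarrow> l < 2 * J
      \<Longrightarrow> frob_sq n (mat_pow n A l) \<le> (C\<^sup>2 * (real n * p * ln (real n)) / 4) ^ l"
  shows "\<bar>(mat_vec n A ^^ k) w u\<bar> \<le> 1 / sqrt (real n) * (C * sqrt (real n * p * ln (real n))) ^ k"
proof -
  define a where "a = C\<^sup>2 * (real n * p * ln (real n))"
  define T where "T = 1 / sqrt (real n) * (C * sqrt (real n * p * ln (real n))) ^ k"
  have "0 < a" unfolding a_def using p_pos ln_ge_1 C_ge n_ge_3 by simp
  have "4000 \<le> C * ln (real n)" using mult_mono[OF C_ge ln_ge_1] C_ge by simp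
  then have "1 \<le> real J" using J_ge by linarith
  then have "1 \<le> J" by simp
  have "T\<^sup>2 = (1 / sqrt (real n))\<^sup>2 * a ^ k"
    unfolding T_def a_def
    using threshold_even_power_eq[of "real n * p * ln (real n)" "1 / sqrt (real n)" C k 1] p_pos ln_ge_1
    by simp
  also have "\<dots> = a ^ k / real n" using n_ge_3 by (simp add: power_divide)
  also have "a ^ k / real n \<ge> (a / 4) ^ k"
    unfolding power_divide using real_le_4_power[OF \<open>J \<le> k\<close>] \<open>0 < a\<close> n_ge_3
    by (intro divide_left_mono) auto
  moreover have "((mat_vec n A ^^ k) w u)\<^sup>2 \<le> (a / 4) ^ k"
    using \<open>0 < a\<close> sq_norm_le_1[OF _ w] n_ge_3 frob
    by (intro funpow_mat_vec_sq_le_of_frob_sq_le[OF \<open>1 \<le> J\<close> _ \<open>J \<le> k\<close> \<open>u < n\<close>]) (simp_all add: a_def)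
  ultimately have "((mat_vec n A ^^ k) w u)\<^sup>2 \<le> T\<^sup>2" by linarith
  moreover have "0 \<le> T" unfolding T_def using C_ge p_pos ln_ge_1 by simp
  ultimately show ?thesis unfolding T_def[symmetric] using abs_le_square_iff by force
qed

lemma card_mult_exp_le: "real J * (real n * real n) * exp (- 3 * real J) \<le> exp (- C * ln (real n))"
proof -
  have "real J \<le> exp (real J)" using exp_ge_add_one_self[of "real J"] by linarith
  moreover have "exp (2 * ln (real n)) = real n * real n"
    using exp_of_nat_mult[of 2 "ln (real n)"] n_ge_3 by (simp add: power2_eq_square)
  ultimately have "real J * (real n * real n) \<le> exp (real J) * exp (2 * ln (real n))"
    by (intro mult_mono) simp_all
  then have "real J * (real n * real n) * exp (- 3 * real J)
      \<le> exp (real J) * exp (2 * ln (real n)) * exp (- 3 * real J)"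
    by (rule mult_right_mono) simp
  also have "\<dots> = exp (2 * ln (real n) - 2 * real J)"
    unfolding exp_add[symmetric] by (rule arg_cong[where f = exp]) simp
  also have "\<dots> \<le> exp (- C * ln (real n))"
  proof -
    have "2 * ln (real n) \<le> C * ln (real n)" using C_ge ln_ge_1 by (intro mult_right_mono) auto
    then show ?thesis using J_ge by simp
  qed
  finally show ?thesis .
qed

lemma prob_walk_sum_gt_le_of_ge:
  assumes "u < n" and w: "\<forall>i<n. \<bar>w i\<bar> \<le> 1 / sqrt (real n)" and "J \<le> k"
  shows "measure_pmf.prob (entries_pmf n P)
      {X. \<bar>(mat_vec n (sym_mat X) ^^ k) w u\<bar> > 1 / sqrt (real n) * (C * sqrt (real n * p * ln (real n))) ^ k}
    \<le> exp (- C * ln (real n))"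
proof -
  define Bad where "Bad l = {X. (C\<^sup>2 * (real n * p * ln (real n)) / 4) ^ l \<le> frob_sq n (mat_pow n (sym_mat X) l)}"
    for l
  have "{X. \<bar>(mat_vec n (sym_mat X) ^^ k) w u\<bar> > 1 / sqrt (real n) * (C * sqrt (real n * p * ln (real n))) ^ k}
      \<subseteq> (\<Union>l\<in>{J..<2 * J}. Bad l)"
    using abs_funpow_mat_vec_le_of_frob_sq_le[OF \<open>u < n\<close> w \<open>J \<le> k\<close>]
    by (force simp: Bad_def not_le intro: less_imp_le)
  then have "measure_pmf.prob (entries_pmf n P)
      {X. \<bar>(mat_vec n (sym_mat X) ^^ k) w u\<bar> > 1 / sqrt (real n) * (C * sqrt (real n * p * ln (real n))) ^ k}
      \<le> measure_pmf.prob (entries_pmf n P) (\<Union>l\<in>{J..<2 * J}. Bad l)"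
    by (rule measure_pmf.finite_measure_mono) simp
  also have "\<dots> \<le> (\<Sum>l\<in>{J..<2 * J}. measure_pmf.prob (entries_pmf n P) (Bad l))"
    by (rule measure_pmf.finite_measure_subadditive_finite) auto
  also have "\<dots> \<le> (\<Sum>l\<in>{J..<2 * J}. real n * real n * exp (- 3 * real J))"
    using prob_frob_sq_mat_pow_ge_le by (intro sum_mono) (simp add: Bad_def)
  also have "\<dots> = real J * (real n * real n) * exp (- 3 * real J)" by simp
  also have "\<dots> \<le> exp (- C * ln (real n))" by (rule card_mult_exp_le)
  finally show ?thesis .
qed

end

lemma prob_walk_sum_gt_le:
  assumes "3 \<le> n" and P_le: "\<forall>i<n. \<forall>j<n. 0 \<le> P i j \<and> P i j \<le> p" and "p \<le> 1"
    and "10000 * ln (real n) \<le> real n * p" and "4000 \<le> C"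
    and "u < n" and "\<forall>i<n. \<bar>w i\<bar> \<le> 1 / sqrt (real n)" and "1 \<le> k"
  shows "measure_pmf.prob (entries_pmf n P)
      {X. \<bar>(mat_vec n (sym_mat X) ^^ k) w u\<bar> > 1 / sqrt (real n) * (C * sqrt (real n * p * ln (real n))) ^ k}
    \<le> exp (- C * ln (real n))"
proof -
  define J where "J = nat \<lceil>C * ln (real n)\<rceil>"
  have "0 \<le> C * ln (real n)" using \<open>4000 \<le> C\<close> \<open>3 \<le> n\<close> by simp
  then have "C * ln (real n) \<le> real J" "real J \<le> C * ln (real n) + 1"
    unfolding J_def by linarith+
  then interpret walk_tail_setting n P p C J
    using assms(1-5) by unfold_locales
  show ?thesis
  proof (cases "k < J")
    case True
    then show ?thesis using prob_walk_sum_gt_le_of_lt[OF assms(6-8)] by simp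
  next
    case False
    then show ?thesis using prob_walk_sum_gt_le_of_ge[OF assms(6,7)] by simp
  qed
qed

lemma pmax_bounds:
  assumes "0 < n" and "\<forall>i<n. \<forall>j<n. 0 \<le> P i j \<and> P i j \<le> 1"
  shows "\<forall>i<n. \<forall>j<n. 0 \<le> P i j \<and> P i j \<le> pmax n P" and "pmax n P \<le> 1"
proof -
  have fin: "finite ((\<lambda>(i, j). P i j) ` {(i, j). i < n \<and> j < n})"
    by (rule finite_imageI, rule finite_subset[of _ "{..<n} \<times> {..<n}"]) auto
  show "\<forall>i<n. \<forall>j<n. 0 \<le> P i j \<and> P i j \<le> pmax n P"
    using assms(2) fin by (force simp: pmax_def intro: Max_ge)
  show "pmax n P \<le> 1"
    unfolding pmax_def using assms by (intro Max.boundedI fin) auto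
qed

theorem proposition9:
  shows "\<exists>c0 > 0. \<exists>C0 > 0. \<exists>\<delta> > 0. \<exists>N. \<forall>n \<ge> N. \<forall>P S u k C.
    (\<forall>i < n. \<forall>j < n. P i j = P j i \<and> 0 \<le> P i j \<and> P i j \<le> 1) \<and>
    S \<subseteq> {..<n} \<and> 2 * card S = n \<and>
    pmax n P \<ge> c0 * ln (real n) ^ 3 / real n \<and>
    u < n \<and> k \<ge> 1 \<and> C \<ge> C0 \<longrightarrow>
    measure_pmf.prob (entries_pmf n P)
      {X. \<bar>((mat_vec n (sym_mat X)) ^^ k) (signal n S) u\<bar>
            > (1 / sqrt (real n)) * (C * sqrt (real n * pmax n P * ln (real n))) ^ k}
    \<le> exp (- \<delta> * C * ln (real n))"
proof (rule exI[of _ 10000], rule conjI, simp, rule exI[of _ 4000], rule conjI, simp,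
    rule exI[of _ 1], rule conjI, simp, rule exI[of _ 3], intro allI impI, elim conjE)
  fix n u k :: nat and P :: "nat \<Rightarrow> nat \<Rightarrow> real" and S :: "nat set" and C :: real
  assume "3 \<le> n" and P_bounds: "\<forall>i<n. \<forall>j<n. P i j = P j i \<and> 0 \<le> P i j \<and> P i j \<le> 1"
    and "S \<subseteq> {..<n}" "2 * card S = n" and dense: "pmax n P \<ge> 10000 * ln (real n) ^ 3 / real n"
    and "u < n" "k \<ge> 1" "C \<ge> 4000"
  have "0 < n" using \<open>3 \<le> n\<close> by simp
  note pmax = pmax_bounds[OF \<open>0 < n\<close>, of P]
  have "ln (real n) ^ 1 \<le> ln (real n) ^ 3"
    using one_le_ln_of_ge_3[OF \<open>3 \<le> n\<close>] by (intro power_increasing) auto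
  then have "10000 * ln (real n) \<le> real n * pmax n P"
    using dense \<open>0 < n\<close> by (simp add: field_simps)
  moreover have "\<forall>i<n. \<bar>signal n S i\<bar> \<le> 1 / sqrt (real n)" by (simp add: signal_def)
  ultimately show "measure_pmf.prob (entries_pmf n P)
      {X. \<bar>((mat_vec n (sym_mat X)) ^^ k) (signal n S) u\<bar>
            > (1 / sqrt (real n)) * (C * sqrt (real n * pmax n P * ln (real n))) ^ k}
    \<le> exp (- 1 * C * ln (real n))"
    using prob_walk_sum_gt_le[OF \<open>3 \<le> n\<close> _ _ _ \<open>C \<ge> 4000\<close> \<open>u < n\<close> _ \<open>k \<ge> 1\<close>] P_bounds pmax by simp
qed

end
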